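(* Let $\Sigma=(\mathcal{U},\mathcal{S})$ be a set system with $m=|\mathcal{U}|$, and let $\mathcal{C}^{*}$ be a minimum-size set cover of $\Sigma$. If a set-cover solution $\mathcal{C}\subseteq\mathcal{S}$ of $\Sigma$ (together with an assignment $\phi$) is stable, then $|\mathcal{C}| \leq O(\log m)\cdot|\mathcal{C}^{*}|$.
   Context: A set system $\Sigma=(\mathcal{U},\mathcal{S})$ consists of a finite universe $\mathcal{U}$ and a finite collection $\mathcal{S}$ of subsets of $\mathcal{U}$; a set-cover solution is a subcollection $\mathcal{C}\subseteq\mathcal{S}$ with $\bigcup_{S\in\mathcal{C}}S=\mathcal{U}$. For a set-cover solution $\mathcal{C}$, an assignment is a map $\phi:\mathcal{U}\to\mathcal{C}$ with $u\in\phi(u)$ for every $u$. For $S\in\mathcal{C}$, its cover set is $\mathtt{cov}(S)=\{u\in\mathcal{U}:\phi(u)=S\}$ (so cover sets of distinct sets are disjoint). The sets of $\mathcal{C}$ are organized into levels $\mathcal{L}_j$, $j\in\mathbb{N}=\{0,1,2,\dots\}$, each set of $\mathcal{C}$ lying in exactly one level, and $A_j=\{u\in\mathcal{U}:\phi(u)\in\mathcal{L}_j\}$. The solution $\mathcal{C}$ is stable if (1) for each $j$ and each $S\in\mathcal{L}_j$, $2^{j}\leq|\mathtt{cov}(S)|<2^{j+1}$; and (2) for each level $\mathcal{L}_j$, there is no $S\in\mathcal{S}$ with $|S\cap A_j|\geq 2^{j+1}$. *)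

theory Defs
  imports Complex_Main
begin

definition set_system :: "'a set \<Rightarrow> 'a set set \<Rightarrow> bool" where
  "set_system U SS \<longleftrightarrow> finite U \<and> finite SS \<and> (\<forall>S\<in>SS. S \<subseteq> U)"

definition is_set_cover :: "'a set \<Rightarrow> 'a set set \<Rightarrow> 'a set set \<Rightarrow> bool" where
  "is_set_cover U SS C \<longleftrightarrow> C \<subseteq> SS \<and> \<Union>C = U"

definition is_min_set_cover :: "'a set \<Rightarrow> 'a set set \<Rightarrow> 'a set set \<Rightarrow> bool" where
  "is_min_set_cover U SS C \<longleftrightarrow> is_set_cover U SS C \<and>
     (\<forall>C'. is_set_cover U SS C' \<longrightarrow> card C \<le> card C')"

definition is_assignment :: "'a set \<Rightarrow> 'a set set \<Rightarrow> ('a \<Rightarrow> 'a set) \<Rightarrow> bool" where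
  "is_assignment U C phi \<longleftrightarrow> (\<forall>u\<in>U. phi u \<in> C \<and> u \<in> phi u)"

definition cov :: "'a set \<Rightarrow> ('a \<Rightarrow> 'a set) \<Rightarrow> 'a set \<Rightarrow> 'a set" where
  "cov U phi S = {u\<in>U. phi u = S}"

definition level_elems :: "'a set \<Rightarrow> 'a set set \<Rightarrow> ('a \<Rightarrow> 'a set) \<Rightarrow> ('a set \<Rightarrow> nat) \<Rightarrow> nat \<Rightarrow> 'a set" where
  "level_elems U C phi lev j = {u\<in>U. phi u \<in> C \<and> lev (phi u) = j}"

definition stable :: "'a set \<Rightarrow> 'a set set \<Rightarrow> 'a set set \<Rightarrow> ('a \<Rightarrow> 'a set) \<Rightarrow> ('a set \<Rightarrow> nat) \<Rightarrow> bool" where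
  "stable U SS C phi lev \<longleftrightarrow>
     (\<forall>S\<in>C. 2 ^ lev S \<le> card (cov U phi S) \<and> card (cov U phi S) < 2 ^ (lev S + 1)) \<and>
     (\<forall>j. \<forall>S\<in>SS. card (S \<inter> level_elems U C phi lev j) < 2 ^ (j + 1))"

end

theory Submission
  imports Defs "HOL-Library.Discrete_Functions"
begin

text \<open>Fix any cover \<open>C\<^sup>*\<close> of \<open>U\<close> by sets of \<open>\<S>\<close>. Each set on level \<open>j\<close> owns at least \<open>2\<^sup>j\<close>
  elements of \<open>A\<^sub>j\<close>, while each set of \<open>C\<^sup>*\<close> meets \<open>A\<^sub>j\<close> in fewer than \<open>2\<^sup>j\<^sup>+\<^sup>1\<close> elements;
  hence level \<open>j\<close> contains at most \<open>2 |C\<^sup>*|\<close> sets. A nonempty level \<open>j\<close> needs \<open>2\<^sup>j \<le> |U|\<close>,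
  so only the \<open>1 + \<lfloor>log\<^sub>2 |U|\<rfloor>\<close> levels \<open>0, \<dots>, \<lfloor>log\<^sub>2 |U|\<rfloor>\<close> can be occupied,
  which gives \<open>|C| \<le> 2 (1 + log\<^sub>2 |U|) |C\<^sup>*|\<close>.\<close>

definition level_sets :: "'a set set \<Rightarrow> ('a set \<Rightarrow> nat) \<Rightarrow> nat \<Rightarrow> 'a set set" where
  "level_sets C lev j = {S\<in>C. lev S = j}"

lemma card_level_sets_mult_le_card_level_elems:
  assumes "finite U" and "finite C" and "is_assignment U C phi" and "stable U SS C phi lev"
  shows "card (level_sets C lev j) * 2 ^ j \<le> card (level_elems U C phi lev j)"
proof -
  have finite_cov: "finite (cov U phi S)" for S
    using \<open>finite U\<close> by (simp add: cov_def)
  have "card (level_sets C lev j) * 2 ^ j = (\<Sum>S\<in>level_sets C lev j. (2::nat) ^ lev S)"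
    by (simp add: level_sets_def)
  also have "\<dots> \<le> (\<Sum>S\<in>level_sets C lev j. card (cov U phi S))"
    using \<open>stable U SS C phi lev\<close> by (intro sum_mono) (auto simp: stable_def level_sets_def)
  also have "\<dots> = card (\<Union>S\<in>level_sets C lev j. cov U phi S)"
    using \<open>finite C\<close> finite_cov by (subst card_UN_disjoint) (auto simp: level_sets_def cov_def)
  also have "\<dots> \<le> card (level_elems U C phi lev j)"
    using \<open>finite U\<close> \<open>is_assignment U C phi\<close>
    by (intro card_mono) (auto simp: level_elems_def cov_def level_sets_def is_assignment_def)
  finally show ?thesis .
qed

lemma card_level_elems_le:
  assumes "finite U" and "finite Cstar" and "Cstar \<subseteq> SS" and "U \<subseteq> \<Union>Cstar"
    and "stable U SS C phi lev"
  shows "card (level_elems U C phi lev j) \<le> card Cstar * 2 ^ (j + 1)"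
proof -
  let ?A = "level_elems U C phi lev j"
  have "card ?A \<le> card (\<Union>T\<in>Cstar. T \<inter> ?A)"
    using assms(1,4) by (intro card_mono) (auto simp: level_elems_def)
  also have "\<dots> \<le> (\<Sum>T\<in>Cstar. card (T \<inter> ?A))"
    using \<open>finite Cstar\<close> by (rule card_UN_le)
  also have "\<dots> \<le> (\<Sum>T\<in>Cstar. 2 ^ (j + 1))"
    using assms(3,5) by (intro sum_mono) (auto simp: stable_def less_imp_le)
  finally show ?thesis by simp
qed

lemma card_level_sets_le:
  assumes "finite U" and "finite C" and "is_assignment U C phi" and "stable U SS C phi lev"
    and "finite Cstar" and "Cstar \<subseteq> SS" and "U \<subseteq> \<Union>Cstar"
  shows "card (level_sets C lev j) \<le> 2 * card Cstar"
proof -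
  have "card (level_sets C lev j) * 2 ^ j \<le> (2 * card Cstar) * 2 ^ j"
    using le_trans[OF card_level_sets_mult_le_card_level_elems[OF assms(1-4)]
        card_level_elems_le[OF assms(1,5-7,4)]]
    by (simp add: ac_simps)
  then show ?thesis by simp
qed

lemma stable_level_le_floor_log:
  assumes "finite U" and "stable U SS C phi lev" and "S \<in> C"
  shows "lev S \<le> floor_log (card U)"
proof -
  have "2 ^ lev S \<le> card (cov U phi S)"
    using assms(2,3) by (simp add: stable_def)
  also have "\<dots> \<le> card U"
    using \<open>finite U\<close> by (intro card_mono) (auto simp: cov_def)
  finally have "floor_log (2 ^ lev S) \<le> floor_log (card U)"
    by (rule floor_log_le_iff)
  then show ?thesis by simp
qed

lemma card_stable_cover_le:
  assumes "finite U" and "finite C" and "is_assignment U C phi" and "stable U SS C phi lev"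
    and "finite Cstar" and "Cstar \<subseteq> SS" and "U \<subseteq> \<Union>Cstar"
  shows "card C \<le> 2 * Suc (floor_log (card U)) * card Cstar"
proof -
  let ?K = "{..floor_log (card U)}"
  have "C = (\<Union>j\<in>?K. level_sets C lev j)"
    using stable_level_le_floor_log[OF assms(1,4)] by (auto simp: level_sets_def)
  then have "card C \<le> (\<Sum>j\<in>?K. card (level_sets C lev j))"
    by (metis card_UN_le finite_atMost)
  also have "\<dots> \<le> (\<Sum>j\<in>?K. 2 * card Cstar)"
    by (intro sum_mono card_level_sets_le[OF assms])
  finally show ?thesis by simp
qed

lemma Suc_floor_log_le_ln:
  "real (Suc (floor_log n)) \<le> (1 + ln (real n)) / ln 2"
proof (cases "n = 0")
  case True
  then show ?thesis by (simp add: ln_2_less_1 less_imp_le)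
next
  case False
  have "real (floor_log n) \<le> log 2 (real n)"
    using False by (simp add: floor_log_altdef)
  also have "\<dots> = ln (real n) / ln 2"
    by (simp add: log_def)
  finally have "real (Suc (floor_log n)) \<le> 1 + ln (real n) / ln 2"
    by simp
  also have "\<dots> \<le> (1 + ln (real n)) / ln 2"
    using ln_2_less_1 by (simp add: field_simps)
  finally show ?thesis .
qed

theorem theorem1:
  shows "\<exists>c::real. c > 0 \<and>
    (\<forall>(U::'a set) SS C phi lev Cstar.
       set_system U SS \<longrightarrow> is_min_set_cover U SS Cstar \<longrightarrow>
       is_set_cover U SS C \<longrightarrow> is_assignment U C phi \<longrightarrow> stable U SS C phi lev \<longrightarrow>
       real (card C) \<le> c * (1 + ln (real (card U))) * real (card Cstar))"
proof (intro exI[of _ "2 / ln 2"] conjI allI impI)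
  fix U :: "'a set" and SS C phi lev Cstar
  assume "set_system U SS" and "is_min_set_cover U SS Cstar" and "is_set_cover U SS C"
    and "is_assignment U C phi" and "stable U SS C phi lev"
  then have "finite U" "finite C" "finite Cstar" "Cstar \<subseteq> SS" "U \<subseteq> \<Union>Cstar"
    by (auto simp: set_system_def is_min_set_cover_def is_set_cover_def intro: finite_subset)
  then have "real (card C) \<le> 2 * real (Suc (floor_log (card U))) * real (card Cstar)"
    using card_stable_cover_le[of U C phi SS lev Cstar] \<open>is_assignment U C phi\<close>
      \<open>stable U SS C phi lev\<close>
    by (metis of_nat_le_iff of_nat_mult of_nat_numeral)
  also have "\<dots> \<le> 2 * ((1 + ln (real (card U))) / ln 2) * real (card Cstar)"
    by (intro mult_right_mono mult_left_mono Suc_floor_log_le_ln) auto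
  finally show "real (card C) \<le> 2 / ln 2 * (1 + ln (real (card U))) * real (card Cstar)"
    by simp
qed simp

end
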